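(* Let $G_1$ be a finite additive group of order $v$ with a subgroup $H$ of order $h$. If there exists a $(G_1,H,k,1)$-BRDF and a nested $(h,k,1)$-BIBD, then there exists a nested $(v,k,1)$-BIBD.
   Context: A $(G,H,k,\lambda)$-RDF is a collection of $k$-subsets of $G$ (base blocks) whose differences $x-y$ ($x\ne y$ in a common base block) cover every element of $G\setminus H$ exactly $\lambda$ times and no element of $H$; it is a BRDF if moreover all base blocks are disjoint from $H$ and the base blocks and their negatives are pairwise disjoint. A $(v,k,\lambda)$-BIBD is a set $X$ of $v$ points with a multiset $\mathcal{A}$ of $k$-subsets such that every pair of distinct points lies in exactly $\lambda$ blocks (partial: at most $\lambda$); it is nested if there is $\phi:\mathcal{A}\to X$ such that $\{A\cup\{\phi(A)\}:A\in\mathcal{A}\}$ is the block multiset of a partial $(v,k+1,\lambda+1)$-BIBD on $X$ (in particular $\phi(A)\notin A$). *)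

theory Defs
  imports Main "HOL-Library.Multiset"
begin

definition add_subgroup :: "'g::ab_group_add set \<Rightarrow> bool" where
  "add_subgroup H \<longleftrightarrow> 0 \<in> H \<and> (\<forall>x\<in>H. \<forall>y\<in>H. x - y \<in> H)"

definition diff_count :: "'g::ab_group_add set list \<Rightarrow> 'g \<Rightarrow> nat" where
  "diff_count F g = sum_list (map (\<lambda>B. card {(x, y). x \<in> B \<and> y \<in> B \<and> x \<noteq> y \<and> x - y = g}) F)"

text \<open>(G,H,k,lambda)-RDF, G being the whole finite group type.\<close>
definition RDF :: "'g::{ab_group_add,finite} set \<Rightarrow> nat \<Rightarrow> nat \<Rightarrow> 'g set list \<Rightarrow> bool" where
  "RDF H k lam F \<longleftrightarrow>
     (\<forall>B\<in>set F. card B = k) \<and>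
     (\<forall>g. g \<notin> H \<longrightarrow> diff_count F g = lam) \<and>
     (\<forall>g\<in>H. diff_count F g = 0)"

definition BRDF :: "'g::{ab_group_add,finite} set \<Rightarrow> nat \<Rightarrow> nat \<Rightarrow> 'g set list \<Rightarrow> bool" where
  "BRDF H k lam F \<longleftrightarrow> RDF H k lam F \<and>
     (\<forall>B\<in>set F. B \<inter> H = {}) \<and>
     (\<forall>i<length F. \<forall>j<length F.
        (i \<noteq> j \<longrightarrow> F ! i \<inter> F ! j = {} \<and> uminus ` (F ! i) \<inter> uminus ` (F ! j) = {}) \<and>
        F ! i \<inter> uminus ` (F ! j) = {})"

definition BIBD :: "nat \<Rightarrow> nat \<Rightarrow> nat \<Rightarrow> 'a set \<Rightarrow> 'a set multiset \<Rightarrow> bool" where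
  "BIBD v k lam X A \<longleftrightarrow> finite X \<and> card X = v \<and>
     (\<forall>B\<in>#A. B \<subseteq> X \<and> card B = k) \<and>
     (\<forall>x\<in>X. \<forall>y\<in>X. x \<noteq> y \<longrightarrow> size (filter_mset (\<lambda>B. x \<in> B \<and> y \<in> B) A) = lam)"

definition partial_BIBD :: "nat \<Rightarrow> nat \<Rightarrow> nat \<Rightarrow> 'a set \<Rightarrow> 'a set multiset \<Rightarrow> bool" where
  "partial_BIBD v k lam X A \<longleftrightarrow> finite X \<and> card X = v \<and>
     (\<forall>B\<in>#A. B \<subseteq> X \<and> card B = k) \<and>
     (\<forall>x\<in>X. \<forall>y\<in>X. x \<noteq> y \<longrightarrow> size (filter_mset (\<lambda>B. x \<in> B \<and> y \<in> B) A) \<le> lam)"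

text \<open>A nested BIBD: each block A (with multiplicity) is paired with its nesting point phi(A);
  P is the multiset of pairs (A, phi(A)).\<close>
definition nested_BIBD :: "nat \<Rightarrow> nat \<Rightarrow> nat \<Rightarrow> 'a set \<Rightarrow> ('a set \<times> 'a) multiset \<Rightarrow> bool" where
  "nested_BIBD v k lam X P \<longleftrightarrow>
     BIBD v k lam X (image_mset fst P) \<and>
     (\<forall>(B, p)\<in>#P. p \<in> X \<and> p \<notin> B) \<and>
     partial_BIBD v (k + 1) (lam + 1) X (image_mset (\<lambda>(B, p). insert p B) P)"

end

(*
  The new design on G consists of the translates g + B of the base blocks B of the BRDF,
  each nested by its translation vector g, together with a copy of the nested (h,k,1)-BIBD
  on every coset of H.  Since the BRDF covers every difference outside H exactly once and
  none inside H, the translates cover each pair {x, y} with x - y outside H exactly once and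
  no pair inside a coset, which the coset designs cover instead.  Adding nesting points,
  a pair {x, y} gains at most one block from the translates: this needs y - x in a base
  block (nested by x) or x - y in one (nested by y), and as the base blocks and their
  negatives are pairwise disjoint and avoid H, at most one such occurrence exists, and
  none if x - y lies in H.
*)

theory Submission
  imports Defs
begin

definition pair_count :: "'a set multiset \<Rightarrow> 'a \<Rightarrow> 'a \<Rightarrow> nat" where
  "pair_count A x y = size (filter_mset (\<lambda>B. x \<in> B \<and> y \<in> B) A)"

lemma pair_count_empty [simp]: "pair_count {#} x y = 0"
  by (simp add: pair_count_def)

lemma pair_count_union [simp]: "pair_count (A + A') x y = pair_count A x y + pair_count A' x y"
  by (simp add: pair_count_def)

lemma pair_count_sum: "pair_count (\<Sum>i\<in>I. A i) x y = (\<Sum>i\<in>I. pair_count (A i) x y)"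
  using sum_comp_morphism[of "\<lambda>M. pair_count M x y" A I] by (simp add: comp_def)

lemma image_mset_sum: "image_mset f (\<Sum>i\<in>I. M i) = (\<Sum>i\<in>I. image_mset f (M i))"
  using sum_comp_morphism[of "image_mset f" M I] by (simp add: comp_def)

lemma pair_count_eq_0_outside:
  assumes "\<forall>B\<in>#A. B \<subseteq> C" and "x \<notin> C \<or> y \<notin> C"
  shows "pair_count A x y = 0"
  using assms unfolding pair_count_def by (induction A) auto

lemma pair_count_image_mset_set:
  "finite S \<Longrightarrow> pair_count (image_mset g (mset_set S)) x y = card {s\<in>S. x \<in> g s \<and> y \<in> g s}"
  by (simp add: pair_count_def filter_mset_image_mset)

lemma pair_count_image:
  assumes "inj_on f X" and "\<forall>B\<in>#A. B \<subseteq> X" and "x \<in> X" and "y \<in> X"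
  shows "pair_count (image_mset (image f) A) (f x) (f y) = pair_count A x y"
proof -
  have "filter_mset (\<lambda>B. f x \<in> f ` B \<and> f y \<in> f ` B) A = filter_mset (\<lambda>B. x \<in> B \<and> y \<in> B) A"
    using assms by (intro filter_mset_cong0) (auto simp: inj_on_image_mem_iff)
  then show ?thesis by (simp add: pair_count_def filter_mset_image_mset)
qed

definition nesting_pair_count :: "('a set \<times> 'a) multiset \<Rightarrow> 'a \<Rightarrow> 'a \<Rightarrow> nat" where
  "nesting_pair_count P x y = size (filter_mset (\<lambda>(B, p). p = x \<and> y \<in> B \<or> p = y \<and> x \<in> B) P)"

lemma pair_count_insert_le:
  assumes "x \<noteq> y"
  shows "pair_count (image_mset (\<lambda>(B, p). insert p B) P) x y
    \<le> pair_count (image_mset fst P) x y + nesting_pair_count P x y"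
  using assms by (induction P) (auto simp: pair_count_def nesting_pair_count_def)

lemma nested_BIBD_iff:
  "nested_BIBD v k lam X P \<longleftrightarrow> finite X \<and> card X = v \<and>
     (\<forall>(B, p)\<in>#P. B \<subseteq> X \<and> card B = k \<and> p \<in> X \<and> p \<notin> B) \<and>
     (\<forall>x\<in>X. \<forall>y\<in>X. x \<noteq> y \<longrightarrow> pair_count (image_mset fst P) x y = lam \<and>
        pair_count (image_mset (\<lambda>(B, p). insert p B) P) x y \<le> lam + 1)"
  unfolding nested_BIBD_def BIBD_def partial_BIBD_def pair_count_def
  by (auto 0 4 simp: card_insert_if dest: finite_subset)

lemma nested_BIBD_image:
  assumes N: "nested_BIBD v k lam X P" and inj: "inj_on f X"
  shows "nested_BIBD v k lam (f ` X) (image_mset (\<lambda>(B, p). (f ` B, f p)) P)"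
proof -
  let ?ins = "\<lambda>(B, p). insert p B"
  let ?fP = "image_mset (\<lambda>(B, p). (f ` B, f p)) P"
  have blocks: "\<forall>(B, p)\<in>#P. B \<subseteq> X \<and> card B = k \<and> p \<in> X \<and> p \<notin> B"
    and counts: "\<forall>x\<in>X. \<forall>y\<in>X. x \<noteq> y \<longrightarrow> pair_count (image_mset fst P) x y = lam \<and>
        pair_count (image_mset ?ins P) x y \<le> lam + 1"
    using N by (simp_all add: nested_BIBD_iff)
  have fst_image: "image_mset fst ?fP = image_mset (image f) (image_mset fst P)"
    and ins_image: "image_mset ?ins ?fP = image_mset (image f) (image_mset ?ins P)"
    by (simp_all add: multiset.map_comp comp_def split_def)
  have "\<forall>B\<in>#image_mset fst P. B \<subseteq> X" "\<forall>B\<in>#image_mset ?ins P. B \<subseteq> X"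
    using blocks by fastforce+
  then have "pair_count (image_mset fst ?fP) (f x) (f y) = lam \<and>
      pair_count (image_mset ?ins ?fP) (f x) (f y) \<le> lam + 1"
    if "x \<in> X" "y \<in> X" "f x \<noteq> f y" for x y
    using that counts pair_count_image[OF inj] unfolding fst_image ins_image by auto
  moreover have "\<forall>(B', p')\<in>#?fP. B' \<subseteq> f ` X \<and> card B' = k \<and> p' \<in> f ` X \<and> p' \<notin> B'"
  proof
    fix z assume "z \<in># ?fP"
    then obtain B p where z: "z = (f ` B, f p)" and "(B, p) \<in># P"
      by auto
    then have "B \<subseteq> X" "card B = k" "p \<in> X" "p \<notin> B"
      using blocks by auto
    then show "case z of (B', p') \<Rightarrow> B' \<subseteq> f ` X \<and> card B' = k \<and> p' \<in> f ` X \<and> p' \<notin> B'"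
      using inj z by (auto simp: card_image inj_on_subset inj_on_image_mem_iff)
  qed
  moreover have "finite (f ` X)" "card (f ` X) = v"
    using N inj by (simp_all add: nested_BIBD_iff card_image)
  ultimately show ?thesis
    unfolding nested_BIBD_iff by blast
qed

lemma nested_BIBD_transfer:
  assumes "nested_BIBD v k lam X P" and "finite Y" and "card Y = v"
  shows "\<exists>Q. nested_BIBD v k lam Y Q"
proof -
  have "finite X" "card X = card Y"
    using assms by (simp_all add: nested_BIBD_iff)
  then obtain f where "bij_betw f X Y"
    using assms(2) finite_same_card_bij by blast
  then show ?thesis
    using nested_BIBD_image[OF assms(1)] by (auto simp: bij_betw_def)
qed

lemma add_subgroup_uminus: "add_subgroup H \<Longrightarrow> x \<in> H \<Longrightarrow> - x \<in> H"
  unfolding add_subgroup_def by (metis diff_0)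

lemma add_subgroup_add:
  assumes "add_subgroup H" and "x \<in> H" and "y \<in> H"
  shows "x + y \<in> H"
  using assms add_subgroup_uminus[OF assms(1,3)] unfolding add_subgroup_def by (metis diff_minus_eq_add)

lemma mem_translate_iff: "x \<in> (+) g ` B \<longleftrightarrow> x - g \<in> (B :: 'g::ab_group_add set)"
  by (auto simp: image_iff) (metis add.commute diff_add_cancel)

lemma card_translate: "card ((+) g ` B) = card (B :: 'g::ab_group_add set)"
  by (simp add: card_image)

lemma mem_coset_iff: "add_subgroup H \<Longrightarrow> y \<in> (+) x ` H \<longleftrightarrow> x - y \<in> H"
  by (metis add_subgroup_uminus minus_diff_eq mem_translate_iff)

lemma coset_eq:
  assumes "add_subgroup H" and "x \<in> (+) g ` H"
  shows "(+) g ` H = (+) x ` H"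
proof -
  have xg: "x - g \<in> H"
    using assms(2) by (simp add: mem_translate_iff)
  have "z - g \<in> H \<longleftrightarrow> z - x \<in> H" for z
  proof
    assume "z - g \<in> H"
    then have "(z - g) - (x - g) \<in> H"
      using assms(1) xg unfolding add_subgroup_def by blast
    then show "z - x \<in> H"
      by simp
  next
    assume "z - x \<in> H"
    then have "(z - x) + (x - g) \<in> H"
      using add_subgroup_add[OF assms(1) _ xg] by blast
    then show "z - g \<in> H"
      by simp
  qed
  then show ?thesis
    by (simp add: set_eq_iff mem_translate_iff)
qed

lemma pair_count_sum_cosets:
  fixes H :: "'g::{ab_group_add,finite} set"
  assumes H: "add_subgroup H"
    and supp: "\<And>C B. C \<in> range (\<lambda>g. (+) g ` H) \<Longrightarrow> B \<in># A C \<Longrightarrow> B \<subseteq> C"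
  shows "pair_count (\<Sum>C\<in>range (\<lambda>g. (+) g ` H). A C) x y
    = (if x - y \<in> H then pair_count (A ((+) x ` H)) x y else 0)"
proof -
  let ?Cs = "range (\<lambda>g. (+) g ` H)"
  have x_coset: "(+) x ` H \<in> ?Cs"
    by simp
  have "pair_count (A C) x y = 0" if other: "C \<in> ?Cs - {(+) x ` H}" for C
  proof -
    obtain g where C: "C = (+) g ` H" and "(+) g ` H \<noteq> (+) x ` H"
      using other by blast
    then have "x \<notin> C"
      using coset_eq[OF H, of x g] by blast
    moreover have "\<forall>B\<in>#A C. B \<subseteq> C"
      using supp[of C] C by simp
    ultimately show ?thesis
      using pair_count_eq_0_outside[of "A C" C x y] by blast
  qed
  then have "pair_count (\<Sum>C\<in>?Cs. A C) x y = pair_count (A ((+) x ` H)) x y"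
    unfolding pair_count_sum by (simp add: sum.remove[OF _ x_coset])
  moreover have "pair_count (A ((+) x ` H)) x y = 0" if "x - y \<notin> H"
  proof -
    have "y \<notin> (+) x ` H"
      using that mem_coset_iff[OF H] by blast
    then show ?thesis
      using supp[OF x_coset] pair_count_eq_0_outside[of "A ((+) x ` H)" "(+) x ` H" x y] by blast
  qed
  ultimately show ?thesis
    by simp
qed

lemma BRDF_base_blocks_disjoint:
  "BRDF H k lam F \<Longrightarrow> i < length F \<Longrightarrow> j < length F \<Longrightarrow> d \<in> F ! i \<Longrightarrow> d \<in> F ! j \<Longrightarrow> i = j"
  unfolding BRDF_def by blast

lemma BRDF_no_negatives:
  "BRDF H k lam F \<Longrightarrow> i < length F \<Longrightarrow> j < length F \<Longrightarrow> d \<in> F ! i \<Longrightarrow> - d \<notin> F ! j"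
  unfolding BRDF_def by (metis disjoint_iff rev_image_eqI)

lemma BRDF_avoids_subgroup: "BRDF H k lam F \<Longrightarrow> i < length F \<Longrightarrow> F ! i \<inter> H = {}"
  unfolding BRDF_def by simp

definition development :: "'g::{ab_group_add,finite} set list \<Rightarrow> ('g set \<times> 'g) multiset" where
  "development F = image_mset (\<lambda>(i, g). ((+) g ` (F ! i), g)) (mset_set ({..<length F} \<times> UNIV))"

lemma card_translates_containing:
  fixes x y :: "'g::ab_group_add"
  assumes "x \<noteq> y"
  shows "card {g. x - g \<in> B \<and> y - g \<in> B} = card {(a, b). a \<in> B \<and> b \<in> B \<and> a \<noteq> b \<and> a - b = x - y}"
    (is "card ?S = card ?T")
proof -
  let ?f = "\<lambda>g. (x - g, y - g)"
  have "?f ` ?S = ?T"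
  proof (rule subset_antisym)
    show "?f ` ?S \<subseteq> ?T"
      using assms by auto
    show "?T \<subseteq> ?f ` ?S"
    proof
      fix z assume "z \<in> ?T"
      then obtain a b where z: "z = (a, b)" "a \<in> B" "b \<in> B" "a - b = x - y"
        by blast
      then have "b = y - (x - a)"
        by (metis diff_diff_eq2 diff_add_cancel add.commute)
      then show "z \<in> ?f ` ?S"
        using z(1-3) by (intro rev_image_eqI[of "x - a"]) auto
    qed
  qed
  moreover have "inj_on ?f ?S"
    by (rule inj_onI) simp
  ultimately show ?thesis
    using card_image by fastforce
qed

lemma pair_count_development:
  assumes "x \<noteq> y"
  shows "pair_count (image_mset fst (development F)) x y = diff_count F (x - y)"
proof -
  have "{s \<in> {..<length F} \<times> UNIV.
        x \<in> (+) (snd s) ` (F ! fst s) \<and> y \<in> (+) (snd s) ` (F ! fst s)}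
      = (SIGMA i:{..<length F}. {g. x - g \<in> F ! i \<and> y - g \<in> F ! i})"
    by (auto simp: mem_translate_iff)
  then have "pair_count (image_mset fst (development F)) x y
      = (\<Sum>i<length F. card {g. x - g \<in> F ! i \<and> y - g \<in> F ! i})"
    by (simp add: development_def multiset.map_comp comp_def split_def pair_count_image_mset_set)
  also have "\<dots> = diff_count F (x - y)"
    by (simp add: diff_count_def sum_list_sum_nth atLeast0LessThan card_translates_containing[OF assms])
  finally show ?thesis .
qed

lemma development_blocks:
  assumes F: "BRDF H k lam F" and H: "add_subgroup H" and B: "(B, p) \<in># development F"
  shows "card B = k \<and> p \<notin> B"
proof -
  obtain i where i: "i < length F" and B_eq: "B = (+) p ` (F ! i)"
    using B by (auto simp: development_def)
  have "card (F ! i) = k"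
    using F i unfolding BRDF_def RDF_def by simp
  moreover have "0 \<notin> F ! i"
    using BRDF_avoids_subgroup[OF F i] H unfolding add_subgroup_def by blast
  ultimately show ?thesis
    using B_eq by (simp add: card_translate mem_translate_iff)
qed

lemma nesting_pair_count_development_le:
  assumes F: "BRDF H k lam F" and H: "add_subgroup H"
  shows "nesting_pair_count (development F) x y \<le> (if x - y \<in> H then 0 else 1)"
proof -
  let ?E = "{(i, g). i < length F \<and> (g = x \<and> y - x \<in> F ! i \<or> g = y \<and> x - y \<in> F ! i)}"
  have "{s \<in> {..<length F} \<times> UNIV. case s of (i, g) \<Rightarrow>
      g = x \<and> y \<in> (+) g ` (F ! i) \<or> g = y \<and> x \<in> (+) g ` (F ! i)} = ?E"
    by (auto simp: mem_translate_iff)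
  then have count: "nesting_pair_count (development F) x y = card ?E"
    by (simp add: nesting_pair_count_def development_def filter_mset_image_mset split_def)
  have empty: "?E = {}" if "x - y \<in> H"
  proof -
    have "y - x \<in> H"
      using add_subgroup_uminus[OF H that] by simp
    then show ?thesis
      using that BRDF_avoids_subgroup[OF F] by blast
  qed
  have at_most_one: "card ?E \<le> 1"
  proof -
    have fin: "finite ?E"
      by (rule finite_subset[of _ "{..<length F} \<times> UNIV"]) auto
    have unique: "s = s'" if E: "s \<in> ?E" "s' \<in> ?E" for s s'
    proof -
      obtain i g where s: "s = (i, g)" "i < length F"
        and g: "g = x \<and> y - x \<in> F ! i \<or> g = y \<and> x - y \<in> F ! i"
        using E(1) by blast
      obtain j g' where s': "s' = (j, g')" "j < length F"
        and g': "g' = x \<and> y - x \<in> F ! j \<or> g' = y \<and> x - y \<in> F ! j"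
        using E(2) by blast
      have "y - x \<in> F ! i \<Longrightarrow> x - y \<notin> F ! j" "x - y \<in> F ! i \<Longrightarrow> y - x \<notin> F ! j"
        using BRDF_no_negatives[OF F s(2) s'(2), of "y - x"]
          BRDF_no_negatives[OF F s(2) s'(2), of "x - y"] by simp_all
      then show ?thesis
        using s s' g g' BRDF_base_blocks_disjoint[OF F s(2) s'(2)] by blast
    qed
    have "card ?E \<le> Suc 0"
      unfolding card_le_Suc0_iff_eq[OF fin] using unique by blast
    then show ?thesis
      by simp
  qed
  show ?thesis
  proof (cases "x - y \<in> H")
    case True
    show ?thesis
      unfolding count empty[OF True] using True by simp
  qed (use count at_most_one in simp)
qed

lemma nested_BIBD_development_plus_cosets:
  fixes F :: "'g::{ab_group_add,finite} set list"
  assumes H: "add_subgroup H" and F: "BRDF H k lam F"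
    and Q: "\<And>C. C \<in> range (\<lambda>g. (+) g ` H) \<Longrightarrow> nested_BIBD (card H) k lam C (Q C)"
  shows "nested_BIBD (card (UNIV :: 'g set)) k lam UNIV
    (development F + (\<Sum>C\<in>range (\<lambda>g. (+) g ` H). Q C))"
proof -
  let ?Cs = "range (\<lambda>g. (+) g ` H)"
  let ?ins = "\<lambda>(B::'g set, p). insert p B"
  have Q_blocks: "\<forall>(B, p)\<in>#Q C. B \<subseteq> C \<and> card B = k \<and> p \<in> C \<and> p \<notin> B" if "C \<in> ?Cs" for C
    using Q[OF that] by (simp add: nested_BIBD_iff)
  have Q_counts: "pair_count (image_mset fst (Q ((+) x ` H))) x y = lam \<and>
      pair_count (image_mset ?ins (Q ((+) x ` H))) x y \<le> lam + 1"
    if "x - y \<in> H" and "x \<noteq> y" for x y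
  proof -
    have "\<forall>u\<in>(+) x ` H. \<forall>w\<in>(+) x ` H. u \<noteq> w \<longrightarrow>
        pair_count (image_mset fst (Q ((+) x ` H))) u w = lam \<and>
        pair_count (image_mset ?ins (Q ((+) x ` H))) u w \<le> lam + 1"
      using Q[of "(+) x ` H"] by (simp add: nested_BIBD_iff)
    moreover have "x \<in> (+) x ` H" "y \<in> (+) x ` H"
      using that H by (simp_all add: mem_coset_iff add_subgroup_def)
    ultimately show ?thesis
      using that(2) by blast
  qed
  have "B \<subseteq> C" if "C \<in> ?Cs" "B \<in># image_mset fst (Q C)" for C B
    using that Q_blocks by fastforce
  from pair_count_sum_cosets[OF H, where A = "\<lambda>C. image_mset fst (Q C)", OF this]
  have fst_cosets: "pair_count (image_mset fst (\<Sum>C\<in>?Cs. Q C)) x y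
      = (if x - y \<in> H then pair_count (image_mset fst (Q ((+) x ` H))) x y else 0)" for x y
    by (simp add: image_mset_sum)
  have "B \<subseteq> C" if "C \<in> ?Cs" "B \<in># image_mset ?ins (Q C)" for C B
    using that Q_blocks by fastforce
  from pair_count_sum_cosets[OF H, where A = "\<lambda>C. image_mset ?ins (Q C)", OF this]
  have ins_cosets: "pair_count (image_mset ?ins (\<Sum>C\<in>?Cs. Q C)) x y
      = (if x - y \<in> H then pair_count (image_mset ?ins (Q ((+) x ` H))) x y else 0)" for x y
    by (simp add: image_mset_sum)
  have diff_count: "diff_count F d = (if d \<in> H then 0 else lam)" for d
    using F unfolding BRDF_def RDF_def by simp
  show ?thesis
    unfolding nested_BIBD_iff
  proof (intro conjI ballI impI)
    fix z assume "z \<in># development F + (\<Sum>C\<in>?Cs. Q C)"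
    then show "case z of (B, p) \<Rightarrow> B \<subseteq> UNIV \<and> card B = k \<and> p \<in> UNIV \<and> p \<notin> B"
      using development_blocks[OF F H] Q_blocks by (fastforce simp: set_mset_sum)
  next
    fix x y :: 'g assume xy: "x \<noteq> y"
    show "pair_count (image_mset fst (development F + (\<Sum>C\<in>?Cs. Q C))) x y = lam"
      using pair_count_development[OF xy] diff_count[of "x - y"] fst_cosets[of x y]
        Q_counts[OF _ xy] by simp
  next
    fix x y :: 'g assume xy: "x \<noteq> y"
    have "pair_count (image_mset ?ins (development F)) x y
        \<le> diff_count F (x - y) + nesting_pair_count (development F) x y"
      using pair_count_insert_le[OF xy, of "development F"] pair_count_development[OF xy, of F]
      by simp
    then show "pair_count (image_mset ?ins (development F + (\<Sum>C\<in>?Cs. Q C))) x y \<le> lam + 1"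
      using nesting_pair_count_development_le[OF F H, of x y] diff_count[of "x - y"]
        ins_cosets[of x y] Q_counts[OF _ xy] by (simp split: if_splits)
  qed simp_all
qed

theorem mainTheorem15:
  fixes H :: "'g::{ab_group_add,finite} set" and v h k :: nat
  assumes "v = card (UNIV :: 'g set)"
    and "add_subgroup H"
    and "h = card H"
    and "\<exists>F. BRDF H k 1 F"
    and "\<exists>(X :: nat set) P. nested_BIBD h k 1 X P"
  shows "\<exists>(X :: nat set) P. nested_BIBD v k 1 X P"
proof -
  obtain F where F: "BRDF H k 1 F"
    using assms(4) by blast
  obtain X0 :: "nat set" and P0 where P0: "nested_BIBD h k 1 X0 P0"
    using assms(5) by blast
  have "\<exists>Q. nested_BIBD (card H) k 1 C Q" if "C \<in> range (\<lambda>g. (+) g ` H)" for C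
  proof -
    have "card C = h"
      using that assms(3) by (auto simp: card_translate)
    then show ?thesis
      using nested_BIBD_transfer[OF P0, of C] assms(3) by simp
  qed
  then obtain Q where "\<And>C. C \<in> range (\<lambda>g. (+) g ` H) \<Longrightarrow> nested_BIBD (card H) k 1 C (Q C)"
    by metis
  then have "nested_BIBD v k 1 (UNIV :: 'g set) (development F + (\<Sum>C\<in>range (\<lambda>g. (+) g ` H). Q C))"
    using nested_BIBD_development_plus_cosets[OF assms(2) F] assms(1) by simp
  then have "\<exists>P. nested_BIBD v k 1 {0..<v} P"
    by (rule nested_BIBD_transfer) simp_all
  then show ?thesis
    by blast
qed

end
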